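(* Let $\alpha\in\mathbb{R}$, $t\in\mathbb{R}$ and assume $Q+\alpha-2>0$. Then for every $r>0$ and every $\phi\in C_0^\infty(B_r)$, $$\int_{B_r}\rho^{\alpha}|\nabla_\gamma\rho|^t|\nabla_\gamma\phi|^2\,dz\ \ge\ \Big(\frac{Q+\alpha-2}{2}\Big)^2\int_{B_r}\rho^{\alpha-2}|\nabla_\gamma\rho|^{t+2}\phi^2\,dz+\frac14\int_{B_r}\rho^{\alpha-2}|\nabla_\gamma\rho|^{t+2}\frac{\phi^2}{\big(\ln\frac{r}{\rho}\big)^2}\,dz .$$
   Context: Points of $\mathbb{R}^n$ are written $z=(x,y)$ with $x\in\mathbb{R}^m$, $y\in\mathbb{R}^k$, $m,k\ge1$, $n=m+k$, and $\gamma>0$. The Baouendi–Grushin gradient is $\nabla_\gamma=(\partial_{x_1},\dots,\partial_{x_m},|x|^\gamma\partial_{y_1},\dots,|x|^\gamma\partial_{y_k})$. The homogeneous dimension is $Q=m+(1+\gamma)k$. The gauge is $\rho(z)=\big(|x|^{2(1+\gamma)}+(1+\gamma)^2|y|^2\big)^{\frac{1}{2(1+\gamma)}}$; one has $|\nabla_\gamma\rho|=|x|^\gamma/\rho^\gamma$. For $r>0$, $B_r=\{z\in\mathbb{R}^n:\rho(z)<r\}$. The integral on the left-hand side is allowed to be $+\infty$. *)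

theory Defs
  imports "HOL-Analysis.Analysis"
begin

fun Ck_fun :: "nat \<Rightarrow> ('a::euclidean_space \<Rightarrow> real) \<Rightarrow> bool" where
  "Ck_fun 0 f = continuous_on UNIV f"
| "Ck_fun (Suc k) f = (continuous_on UNIV f \<and> f differentiable_on UNIV \<and>
      (\<forall>v. Ck_fun k (\<lambda>z. frechet_derivative f (at z) v)))"

definition smooth_fun :: "('a::euclidean_space \<Rightarrow> real) \<Rightarrow> bool" where
  "smooth_fun f \<longleftrightarrow> (\<forall>k. Ck_fun k f)"

definition C0_infty :: "'a::euclidean_space set \<Rightarrow> ('a \<Rightarrow> real) \<Rightarrow> bool" where
  "C0_infty U f \<longleftrightarrow> smooth_fun f \<and> compact (closure {z. f z \<noteq> 0})
      \<and> closure {z. f z \<noteq> 0} \<subseteq> U"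

text \<open>Points z = (x,y) with x in R^m, y in R^k (m = CARD('m), k = CARD('k)).\<close>
definition hom_dim :: "real \<Rightarrow> 'm::finite itself \<Rightarrow> 'k::finite itself \<Rightarrow> real" where
  "hom_dim \<gamma> _ _ = real CARD('m) + (1 + \<gamma>) * real CARD('k)"

definition gauge :: "real \<Rightarrow> (real^'m) \<times> (real^'k) \<Rightarrow> real" where
  "gauge \<gamma> z = (norm (fst z) powr (2 * (1 + \<gamma>)) + (1 + \<gamma>)\<^sup>2 * (norm (snd z))\<^sup>2)
                 powr (1 / (2 * (1 + \<gamma>)))"

definition gauge_ball :: "real \<Rightarrow> real \<Rightarrow> ((real^'m) \<times> (real^'k)) set" where
  "gauge_ball \<gamma> r = {z. gauge \<gamma> z < r}"

text \<open>|\<nabla>_\<gamma> \<rho>| = |x|^\<gamma> / \<rho>^\<gamma> (the formula given in the paper; defined off a null set).\<close>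
definition grad_gauge_norm :: "real \<Rightarrow> (real^'m) \<times> (real^'k) \<Rightarrow> real" where
  "grad_gauge_norm \<gamma> z = norm (fst z) powr \<gamma> / gauge \<gamma> z powr \<gamma>"

definition grushin_grad_sq ::
  "real \<Rightarrow> ((real^'m) \<times> (real^'k) \<Rightarrow> real) \<Rightarrow> (real^'m) \<times> (real^'k) \<Rightarrow> real" where
  "grushin_grad_sq \<gamma> f z =
     (\<Sum>i\<in>UNIV. (frechet_derivative f (at z) (axis i 1, 0))\<^sup>2)
     + norm (fst z) powr (2 * \<gamma>) *
       (\<Sum>j\<in>UNIV. (frechet_derivative f (at z) (0, axis j 1))\<^sup>2)"

end

theory Submission
  imports Defs
begin

(* The proof works in polar coordinates adapted to the anisotropic dilations
   \<delta>_s(x,y) = (s x, s^{1+\<gamma>} y), for which the gauge \<rho> is homogeneous of degree one, the weight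
   |\<nabla>_\<gamma>\<rho>| of degree zero, and Lebesgue measure of degree Q.  Writing z = \<delta>_s w with w on a
   fixed shell gives dz = s^{Q-1} ds dw, so both sides of the theorem become integrals over the
   orbits s \<mapsto> \<delta>_s w.  On each orbit:
   - the Hardy side is |\<nabla>_\<gamma>\<rho>(w)|^{t+2} \<rho>(w)^{\<alpha>-2} times the right-hand side of a
     one-dimensional inequality with \<beta> = Q + \<alpha> - 2 and u(s) = \<phi>(\<delta>_s w);
   - by Cauchy--Schwarz, |\<nabla>_\<gamma>\<phi>| \<ge> |\<nabla>_\<gamma>\<rho>| |u'(s)| / \<rho>(w), which bounds the energy side
     from below by the same constant times the one-dimensional left-hand side;
   - the one-dimensional inequality  \<integral>_0^b (\<beta>/2)\<^sup>2 s^{\<beta>-1} u\<^sup>2 + s^{\<beta>-1} u\<^sup>2 / (4 ln\<^sup>2(R/s)) \<le> \<integral>_0^b s^{\<beta>+1} u'\<^sup>2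
     (u(b) = 0, b < R) follows by completing a square against the derivative of
     -s^\<beta> (\<beta>/2 + 1/(2 ln(R/s))) u\<^sup>2 and letting the lower endpoint tend to 0.
   The sections below establish, in order: the dilation geometry and the pointwise bound, the polar
   coordinate formula, the one-dimensional inequality, the comparison along orbits, and the theorem. *)

section \<open>Anisotropic dilations and the gauge\<close>

definition dilation :: "real \<Rightarrow> real \<Rightarrow> (real^'m::finite) \<times> (real^'k::finite) \<Rightarrow> (real^'m) \<times> (real^'k)" where
  "dilation \<gamma> s z = (s *\<^sub>R fst z, (s powr (1 + \<gamma>)) *\<^sub>R snd z)"

lemma gauge_nonneg: "gauge \<gamma> z \<ge> 0"
  by (simp add: gauge_def)

lemma gauge_powr_eq:
  assumes "\<gamma> > 0"
  shows "gauge \<gamma> z powr (2 * (1 + \<gamma>)) = norm (fst z) powr (2 * (1 + \<gamma>)) + (1 + \<gamma>)\<^sup>2 * (norm (snd z))\<^sup>2"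
  using assms unfolding gauge_def by (simp add: powr_powr)

lemma gauge_pos:
  assumes g: "\<gamma> > 0" and z: "z \<noteq> 0"
  shows "gauge \<gamma> z > 0"
proof -
  have "fst z \<noteq> 0 \<or> snd z \<noteq> 0"
    using z by (cases z) (auto simp: zero_prod_def)
  then have "0 < norm (fst z) powr (2 * (1 + \<gamma>)) + (1 + \<gamma>)\<^sup>2 * (norm (snd z))\<^sup>2"
    using g by (auto intro: add_pos_nonneg add_nonneg_pos)
  then show ?thesis unfolding gauge_def by simp
qed

lemma continuous_on_gauge:
  assumes g: "\<gamma> > 0"
  shows "continuous_on UNIV (gauge \<gamma> :: (real^'m::finite) \<times> (real^'k::finite) \<Rightarrow> real)"
proof -
  have x: "continuous_on UNIV (\<lambda>z::(real^'m) \<times> (real^'k). norm (fst z) powr (2 * (1 + \<gamma>)))"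
    using g by (intro continuous_on_powr' continuous_intros) auto
  have "continuous_on UNIV (\<lambda>z::(real^'m) \<times> (real^'k).
               norm (fst z) powr (2 * (1 + \<gamma>)) + (1 + \<gamma>)\<^sup>2 * (norm (snd z))\<^sup>2)"
    by (intro continuous_intros x)
  with g show ?thesis unfolding gauge_def
    by (intro continuous_on_powr' continuous_intros) auto
qed

lemma gauge_measurable [measurable]: "\<gamma> > 0 \<Longrightarrow> gauge \<gamma> \<in> borel_measurable borel"
  by (rule borel_measurable_continuous_onI[OF continuous_on_gauge])

lemma gauge_dilation:
  assumes g: "\<gamma> > 0" and s: "s > 0"
  shows "gauge \<gamma> (dilation \<gamma> s z) = s * gauge \<gamma> z"
proof -
  let ?p = "2 * (1 + \<gamma>)"
  have x: "norm (s *\<^sub>R fst z) powr ?p = s powr ?p * norm (fst z) powr ?p"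
    using s by (simp add: powr_mult)
  have "(s powr (1 + \<gamma>))\<^sup>2 = s powr ?p"
    using s by (simp add: power2_eq_square powr_add[symmetric])
  then have y: "(norm ((s powr (1 + \<gamma>)) *\<^sub>R snd z))\<^sup>2 = s powr ?p * (norm (snd z))\<^sup>2"
    using s by (simp add: power_mult_distrib)
  have "gauge \<gamma> (dilation \<gamma> s z)
      = (s powr ?p * (norm (fst z) powr ?p + (1 + \<gamma>)\<^sup>2 * (norm (snd z))\<^sup>2)) powr (1 / ?p)"
    unfolding gauge_def dilation_def fst_conv snd_conv by (simp only: x y) (simp add: algebra_simps)
  also have "\<dots> = (s powr ?p) powr (1 / ?p) * gauge \<gamma> z"
    unfolding gauge_def by (rule powr_mult)
  also have "(s powr ?p) powr (1 / ?p) = s"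
    using s g by (simp add: powr_powr)
  finally show ?thesis .
qed

lemma grad_gauge_norm_dilation:
  assumes g: "\<gamma> > 0" and s: "s > 0"
  shows "grad_gauge_norm \<gamma> (dilation \<gamma> s z) = grad_gauge_norm \<gamma> z"
  using s unfolding grad_gauge_norm_def gauge_dilation[OF g s]
  by (simp add: dilation_def powr_mult gauge_nonneg)

lemma dilation_measurable [measurable]:
  "(\<lambda>p::((real^'m::finite) \<times> (real^'k::finite)) \<times> real. dilation \<gamma> (snd p) (fst p))
     \<in> borel_measurable borel"
  "(\<lambda>w::(real^'m::finite) \<times> (real^'k::finite). dilation \<gamma> s w) \<in> borel_measurable borel"
  "(\<lambda>s. dilation \<gamma> s (w::(real^'m::finite) \<times> (real^'k::finite))) \<in> borel_measurable borel"
  unfolding dilation_def borel_prod[symmetric] by measurable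

(* Velocity of the dilation orbit s \<mapsto> \<delta>_s w; at s it equals (x, (1+\<gamma>) y)/s for (x,y) = \<delta>_s w. *)
lemma dilation_has_vector_derivative:
  assumes s: "s > 0"
  shows "((\<lambda>s. dilation \<gamma> s w) has_vector_derivative (fst w, ((1 + \<gamma>) * s powr \<gamma>) *\<^sub>R snd w)) (at s)"
proof -
  have "((\<lambda>s. s powr (1 + \<gamma>)) has_real_derivative ((1 + \<gamma>) * s powr \<gamma>)) (at s)"
    using has_real_derivative_powr[OF s, of "1 + \<gamma>"] by simp
  then show ?thesis
    unfolding dilation_def
    by (auto intro!: has_vector_derivative_Pair has_vector_derivative_eq_rhs[OF
          has_vector_derivative_scaleR[OF _ has_vector_derivative_const]] DERIV_ident)
qed

(* The identity |\<nabla>_\<gamma>\<rho>|\<^sup>2 (|x|\<^sup>2 + (1+\<gamma>)\<^sup>2 |y|\<^sup>2 / |x|^{2\<gamma>}) = \<rho>\<^sup>2, off the degenerate set x = 0.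
   It expresses that the dilation generator (x, (1+\<gamma>) y) has Grushin length \<rho> / |\<nabla>_\<gamma>\<rho>|. *)
lemma grad_gauge_norm_generator_identity:
  assumes g: "\<gamma> > 0" and x: "fst z \<noteq> 0"
  shows "(grad_gauge_norm \<gamma> z)\<^sup>2 *
           ((norm (fst z))\<^sup>2 + (1 + \<gamma>)\<^sup>2 * (norm (snd z))\<^sup>2 / norm (fst z) powr (2 * \<gamma>))
         = (gauge \<gamma> z)\<^sup>2"
proof -
  define n where "n = norm (fst z)"
  define \<rho> where "\<rho> = gauge \<gamma> z"
  have n: "n > 0" using x by (simp add: n_def)
  have "z \<noteq> 0" using x by (metis fst_zero)
  then have \<rho>: "\<rho> > 0" using gauge_pos[OF g] by (simp add: \<rho>_def)
  have split: "p powr (2 * (1 + \<gamma>)) = p\<^sup>2 * p powr (2 * \<gamma>)" if "p > 0" for p :: real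
  proof -
    have "p powr (2 * (1 + \<gamma>)) = p powr 2 * p powr (2 * \<gamma>)"
      by (simp add: powr_add[symmetric] algebra_simps)
    then show ?thesis using that by simp
  qed
  have "n powr (2 * \<gamma>) * (n\<^sup>2 + (1 + \<gamma>)\<^sup>2 * (norm (snd z))\<^sup>2 / n powr (2 * \<gamma>))
          = n powr (2 * (1 + \<gamma>)) + (1 + \<gamma>)\<^sup>2 * (norm (snd z))\<^sup>2"
    using n unfolding split[OF n] by (simp add: field_simps)
  also have "\<dots> = \<rho>\<^sup>2 * \<rho> powr (2 * \<gamma>)"
    using gauge_powr_eq[OF g, of z] split[OF \<rho>] by (simp add: n_def \<rho>_def)
  finally have PY: "n powr (2 * \<gamma>) * (n\<^sup>2 + (1 + \<gamma>)\<^sup>2 * (norm (snd z))\<^sup>2 / n powr (2 * \<gamma>))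
                  = \<rho>\<^sup>2 * \<rho> powr (2 * \<gamma>)" .
  have "(grad_gauge_norm \<gamma> z)\<^sup>2 = n powr (2 * \<gamma>) / \<rho> powr (2 * \<gamma>)"
    unfolding grad_gauge_norm_def n_def[symmetric] \<rho>_def[symmetric]
    using n \<rho> by (simp add: power_divide powr_add[symmetric] power2_eq_square)
  then have "(grad_gauge_norm \<gamma> z)\<^sup>2 * (n\<^sup>2 + (1 + \<gamma>)\<^sup>2 * (norm (snd z))\<^sup>2 / n powr (2 * \<gamma>))
      = n powr (2 * \<gamma>) * (n\<^sup>2 + (1 + \<gamma>)\<^sup>2 * (norm (snd z))\<^sup>2 / n powr (2 * \<gamma>)) / \<rho> powr (2 * \<gamma>)"
    by simp
  also have "\<dots> = \<rho>\<^sup>2"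
    unfolding PY using \<rho> by simp
  finally show ?thesis unfolding n_def \<rho>_def .
qed

(* Pointwise Cauchy--Schwarz bound: for every linear D (the differential of \<phi> at z),
   |\<nabla>_\<gamma>\<rho>|\<^sup>2 (D(x, (1+\<gamma>) y))\<^sup>2 / \<rho>\<^sup>2 \<le> |\<nabla>_\<gamma>\<phi>|\<^sup>2.  This replaces |\<nabla>_\<gamma>\<phi>| by the derivative of \<phi>
   along the dilation orbits, which is what the radial Hardy inequality controls. *)
lemma radial_derivative_le_grushin_grad:
  fixes D :: "(real^'m::finite) \<times> (real^'k::finite) \<Rightarrow> real"
  assumes lin: "linear D" and g: "\<gamma> > 0" and x0: "fst z \<noteq> 0"
  shows "(grad_gauge_norm \<gamma> z)\<^sup>2 * (D (fst z, (1 + \<gamma>) *\<^sub>R snd z))\<^sup>2 / (gauge \<gamma> z)\<^sup>2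
     \<le> (\<Sum>i\<in>UNIV. (D (axis i 1, 0))\<^sup>2) + norm (fst z) powr (2 * \<gamma>) * (\<Sum>j\<in>UNIV. (D (0, axis j 1))\<^sup>2)"
proof -
  obtain x y where z: "z = (x, y)" by (cases z)
  obtain A B where AB: "adjoint D 1 = (A, B)" by (cases "adjoint D 1")
  have D: "D (u, v) = u \<bullet> A + v \<bullet> B" for u v
    using adjoint_works[OF lin, of "(u, v)" 1] by (simp add: AB)
  define n where "n = norm x"
  have n: "n > 0" using x0 z by (simp add: n_def)
  define c where "c = (1 + \<gamma>) / n powr \<gamma>"
  define X where "X = (x, c *\<^sub>R y) \<bullet> (x, c *\<^sub>R y)"
  define G where "G = (\<Sum>i\<in>UNIV. (D (axis i 1, 0))\<^sup>2) + n powr (2 * \<gamma>) * (\<Sum>j\<in>UNIV. (D (0, axis j 1))\<^sup>2)"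
  have n2: "n powr (2 * \<gamma>) = (n powr \<gamma>)\<^sup>2"
    using n by (simp add: power2_eq_square powr_add[symmetric])
  have G: "G = (A, (n powr \<gamma>) *\<^sub>R B) \<bullet> (A, (n powr \<gamma>) *\<^sub>R B)"
    unfolding G_def n2 by (simp add: D inner_axis') (simp add: inner_vec_def power2_eq_square algebra_simps)
  have "D (x, (1 + \<gamma>) *\<^sub>R y) = (x, c *\<^sub>R y) \<bullet> (A, (n powr \<gamma>) *\<^sub>R B)"
    using n by (simp add: D c_def)
  then have CS: "(D (x, (1 + \<gamma>) *\<^sub>R y))\<^sup>2 \<le> X * G"
    unfolding X_def G by (metis Cauchy_Schwarz_ineq)
  have "X = n\<^sup>2 + (1 + \<gamma>)\<^sup>2 * (norm y)\<^sup>2 / n powr (2 * \<gamma>)"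
    unfolding X_def inner_Pair c_def n2 using n
    by (simp add: n_def power2_norm_eq_inner[symmetric] power_divide power2_eq_square)
  then have X: "(grad_gauge_norm \<gamma> z)\<^sup>2 * X = (gauge \<gamma> z)\<^sup>2"
    using grad_gauge_norm_generator_identity[OF g x0] by (simp add: z n_def)
  have "(grad_gauge_norm \<gamma> z)\<^sup>2 * (D (x, (1 + \<gamma>) *\<^sub>R y))\<^sup>2 \<le> (grad_gauge_norm \<gamma> z)\<^sup>2 * (X * G)"
    using CS by (rule mult_left_mono) simp
  also have "\<dots> = (gauge \<gamma> z)\<^sup>2 * G"
    using X by (simp add: algebra_simps)
  moreover have "gauge \<gamma> z > 0"
    using gauge_pos[OF g] x0 by (metis fst_zero)
  ultimately show ?thesis
    by (simp add: z G_def n_def field_simps)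
qed

section \<open>Polar coordinates adapted to the dilations\<close>

lemma nn_integral_lborel_scale:
  fixes f :: "'a::euclidean_space \<Rightarrow> ennreal"
  assumes [measurable]: "f \<in> borel_measurable borel" and c: "c > 0"
  shows "(\<integral>\<^sup>+x. f x \<partial>lborel) = ennreal (c ^ DIM('a)) * (\<integral>\<^sup>+x. f (c *\<^sub>R x) \<partial>lborel)"
  using c by (subst lborel_affine[of c 0])
    (simp_all add: nn_integral_density nn_integral_distr nn_integral_cmult ennreal_power)

lemma nn_integral_lborel_pair:
  fixes g :: "('a::euclidean_space) \<times> ('b::euclidean_space) \<Rightarrow> ennreal"
  assumes "g \<in> borel_measurable borel"
  shows "(\<integral>\<^sup>+z. g z \<partial>lborel) = (\<integral>\<^sup>+x. \<integral>\<^sup>+y. g (x, y) \<partial>lborel \<partial>lborel)"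
  using assms lborel.nn_integral_fst[of g lborel] by (simp add: lborel_prod)

lemma nn_integral_lborel_scale_pair:
  fixes f :: "(real^'m::finite) \<times> (real^'k::finite) \<Rightarrow> ennreal"
  assumes [measurable]: "f \<in> borel_measurable borel" and a: "a > 0" and b: "b > 0"
  shows "(\<integral>\<^sup>+z. f z \<partial>lborel)
       = ennreal (a ^ CARD('m) * b ^ CARD('k)) * (\<integral>\<^sup>+z. f (a *\<^sub>R fst z, b *\<^sub>R snd z) \<partial>lborel)"
proof -
  have "(\<lambda>z::(real^'m) \<times> (real^'k). (a *\<^sub>R fst z, b *\<^sub>R snd z)) \<in> borel_measurable borel"
    by (intro borel_measurable_continuous_onI continuous_intros)
  from measurable_compose[OF this assms(1)]
  have scaled [measurable]: "(\<lambda>z. f (a *\<^sub>R fst z, b *\<^sub>R snd z)) \<in> borel_measurable borel"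
    by (simp add: o_def)
  have slice [measurable]: "(\<lambda>y. f (x, y)) \<in> borel_measurable borel" for x
    using measurable_Pair2[of f borel borel _ x] by (simp add: borel_prod)
  have "(\<integral>\<^sup>+z. f z \<partial>lborel) = (\<integral>\<^sup>+x. \<integral>\<^sup>+y. f (x, y) \<partial>lborel \<partial>lborel)"
    by (rule nn_integral_lborel_pair) measurable
  also have "\<dots> = (\<integral>\<^sup>+x. ennreal (b ^ CARD('k)) * (\<integral>\<^sup>+y. f (x, b *\<^sub>R y) \<partial>lborel) \<partial>lborel)"
    by (intro nn_integral_cong, subst nn_integral_lborel_scale[OF slice b]) simp
  also have "\<dots> = ennreal (b ^ CARD('k)) * (\<integral>\<^sup>+x. \<integral>\<^sup>+y. f (x, b *\<^sub>R y) \<partial>lborel \<partial>lborel)"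
    by (rule nn_integral_cmult) measurable
  also have "(\<integral>\<^sup>+x. \<integral>\<^sup>+y. f (x, b *\<^sub>R y) \<partial>lborel \<partial>lborel)
      = ennreal (a ^ CARD('m)) * (\<integral>\<^sup>+x. \<integral>\<^sup>+y. f (a *\<^sub>R x, b *\<^sub>R y) \<partial>lborel \<partial>lborel)"
    by (subst nn_integral_lborel_scale[OF _ a]) auto
  also have "(\<integral>\<^sup>+x. \<integral>\<^sup>+y. f (a *\<^sub>R x, b *\<^sub>R y) \<partial>lborel \<partial>lborel)
      = (\<integral>\<^sup>+z. f (a *\<^sub>R fst z, b *\<^sub>R snd z) \<partial>lborel)"
    by (subst nn_integral_lborel_pair[OF scaled]) simp
  finally show ?thesis
    using a b by (simp add: ennreal_mult' mult.assoc mult.left_commute)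
qed

(* The Jacobian of \<delta>_s is s^Q: this is why Q is the homogeneous dimension. *)
lemma nn_integral_dilation:
  fixes f :: "(real^'m::finite) \<times> (real^'k::finite) \<Rightarrow> ennreal"
  assumes [measurable]: "f \<in> borel_measurable borel" and s: "s > 0"
  shows "(\<integral>\<^sup>+z. f z \<partial>lborel)
       = ennreal (s powr hom_dim \<gamma> TYPE('m) TYPE('k)) * (\<integral>\<^sup>+w. f (dilation \<gamma> s w) \<partial>lborel)"
proof -
  have "s ^ CARD('m) * (s powr (1 + \<gamma>)) ^ CARD('k) = s powr hom_dim \<gamma> TYPE('m) TYPE('k)"
    using s by (simp add: hom_dim_def powr_realpow[symmetric] powr_powr powr_add[symmetric] algebra_simps)
  then show ?thesis
    using nn_integral_lborel_scale_pair[OF _ s, of f "s powr (1 + \<gamma>)"] s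
    by (simp add: dilation_def)
qed

(* Polar coordinates: every z \<noteq> 0 is \<delta>_s w for s > 0 and w in the shell {1 \<le> \<rho> \<le> e}, and
   dz = s^{Q-1} ds dw.  To avoid parametrising the shell we insert a radial variable through a
   kernel of total mass one and exchange the order of integration. *)
definition gauge_shell :: "real \<Rightarrow> ((real^'m::finite) \<times> (real^'k::finite)) set" where
  "gauge_shell \<gamma> = {w. 1 \<le> gauge \<gamma> w \<and> gauge \<gamma> w \<le> exp 1}"

definition radial_kernel :: "real \<Rightarrow> (real^'m::finite) \<times> (real^'k::finite) \<Rightarrow> real \<Rightarrow> ennreal" where
  "radial_kernel \<gamma> z s = ennreal (1 / s) * indicator {s. 0 < s \<and> s \<le> gauge \<gamma> z \<and> gauge \<gamma> z \<le> exp 1 * s} s"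

(* The kernel is ds/s on [\<rho>(z)/e, \<rho>(z)], of mass ln e = 1. *)
lemma nn_integral_radial_kernel:
  assumes g: "\<gamma> > 0" and z: "z \<noteq> 0"
  shows "(\<integral>\<^sup>+s. radial_kernel \<gamma> z s \<partial>lborel) = 1"
proof -
  define \<rho> where "\<rho> = gauge \<gamma> z"
  have \<rho>: "\<rho> > 0" using gauge_pos[OF g z] by (simp add: \<rho>_def)
  have set: "{s. 0 < s \<and> s \<le> \<rho> \<and> \<rho> \<le> exp 1 * s} = {\<rho> / exp 1..\<rho>}"
    using \<rho> by (auto simp: field_simps) (smt (verit) exp_gt_zero mult_nonpos_nonneg)
  have pos: "s > 0" if "s \<in> {\<rho> / exp 1..\<rho>}" for s
    using that \<rho> by (auto intro: less_le_trans[of 0 "\<rho> / exp 1"])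
  have "((\<lambda>s. 1 / s) has_integral (ln \<rho> - ln (\<rho> / exp 1))) {\<rho> / exp 1..\<rho>}"
  proof (rule fundamental_theorem_of_calculus)
    show "\<rho> / exp 1 \<le> \<rho>" using \<rho> by (simp add: field_simps)
    fix s assume "s \<in> {\<rho> / exp 1..\<rho>}"
    then have "(ln has_real_derivative 1 / s) (at s)"
      using pos by (auto intro!: derivative_eq_intros)
    then show "(ln has_vector_derivative 1 / s) (at s within {\<rho> / exp 1..\<rho>})"
      by (simp add: has_real_derivative_iff_has_vector_derivative[symmetric] has_field_derivative_at_within)
  qed
  moreover have "ln \<rho> - ln (\<rho> / exp 1) = 1"
    using \<rho> by (simp add: ln_div)
  ultimately have "(\<integral>\<^sup>+s. ennreal (1 / s) * indicator {\<rho> / exp 1..\<rho>} s \<partial>lborel) = ennreal 1"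
    using pos by (intro nn_integral_has_integral_lebesgue') (auto simp: less_imp_le)
  moreover have "radial_kernel \<gamma> z = (\<lambda>s. ennreal (1 / s) * indicator {\<rho> / exp 1..\<rho>} s)"
    unfolding radial_kernel_def \<rho>_def[symmetric] set ..
  ultimately show ?thesis by (simp only: ennreal_1)
qed

lemma nn_integral_radial_kernel_dilation:
  fixes f :: "(real^'m::finite) \<times> (real^'k::finite) \<Rightarrow> ennreal"
  assumes g: "\<gamma> > 0" and [measurable]: "f \<in> borel_measurable borel"
  shows "(\<integral>\<^sup>+z. radial_kernel \<gamma> z s * f z \<partial>lborel)
       = indicator {0<..} s * ennreal (s powr (hom_dim \<gamma> TYPE('m) TYPE('k) - 1)) *
           (\<integral>\<^sup>+w. indicator (gauge_shell \<gamma>) w * f (dilation \<gamma> s w) \<partial>lborel)"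
proof (cases "s > 0")
  case False
  then show ?thesis by (simp add: radial_kernel_def)
next
  case s: True
  define Q where "Q = hom_dim \<gamma> TYPE('m) TYPE('k)"
  note [measurable] = gauge_measurable[OF g]
  have [measurable]: "gauge_shell \<gamma> \<in> sets borel"
    unfolding gauge_shell_def by measurable
  have kernel: "radial_kernel \<gamma> (dilation \<gamma> s w) s = ennreal (1 / s) * indicator (gauge_shell \<gamma>) w" for w
    using s unfolding radial_kernel_def gauge_shell_def gauge_dilation[OF g s] by (auto simp: indicator_def)
  have "(\<lambda>z. radial_kernel \<gamma> z s * f z) \<in> borel_measurable borel"
    unfolding radial_kernel_def by measurable
  from nn_integral_dilation[OF this s, where \<gamma> = \<gamma>]
  have "(\<integral>\<^sup>+z. radial_kernel \<gamma> z s * f z \<partial>lborel)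
      = ennreal (s powr Q) * (\<integral>\<^sup>+w. ennreal (1 / s) * (indicator (gauge_shell \<gamma>) w * f (dilation \<gamma> s w)) \<partial>lborel)"
    unfolding Q_def kernel by (simp add: mult.assoc)
  also have "\<dots> = ennreal (s powr Q) * ennreal (1 / s) *
                     (\<integral>\<^sup>+w. indicator (gauge_shell \<gamma>) w * f (dilation \<gamma> s w) \<partial>lborel)"
    by (subst nn_integral_cmult) (measurable, simp add: mult.assoc)
  also have "ennreal (s powr Q) * ennreal (1 / s) = ennreal (s powr (Q - 1))"
    using s by (simp add: ennreal_mult'[symmetric] powr_diff)
  finally show ?thesis using s by (simp add: Q_def)
qed

lemma nn_integral_polar:
  fixes f :: "(real^'m::finite) \<times> (real^'k::finite) \<Rightarrow> ennreal"
  assumes g: "\<gamma> > 0" and [measurable]: "f \<in> borel_measurable borel"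
  shows "(\<integral>\<^sup>+z. f z \<partial>lborel) =
           (\<integral>\<^sup>+w. indicator (gauge_shell \<gamma>) w *
              (\<integral>\<^sup>+s. indicator {0<..} s * ennreal (s powr (hom_dim \<gamma> TYPE('m) TYPE('k) - 1)) *
                       f (dilation \<gamma> s w) \<partial>lborel) \<partial>lborel)"
proof -
  define Q where "Q = hom_dim \<gamma> TYPE('m) TYPE('k)"
  note [measurable] = gauge_measurable[OF g]
  have [measurable]: "gauge_shell \<gamma> \<in> sets borel"
    unfolding gauge_shell_def by measurable
  have [measurable]: "(\<lambda>p. f (dilation \<gamma> (snd p) (fst p))) \<in> borel_measurable (lborel \<Otimes>\<^sub>M lborel)"
    using measurable_compose[OF dilation_measurable(1)] by (simp add: lborel_prod o_def)
  have "(\<integral>\<^sup>+z. f z \<partial>lborel) = (\<integral>\<^sup>+z. \<integral>\<^sup>+s. radial_kernel \<gamma> z s * f z \<partial>lborel \<partial>lborel)"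
  proof (rule nn_integral_cong_AE)
    have kernel: "f z = (\<integral>\<^sup>+s. radial_kernel \<gamma> z s * f z \<partial>lborel)" if "z \<noteq> 0" for z
    proof -
      have "(\<integral>\<^sup>+s. radial_kernel \<gamma> z s * f z \<partial>lborel) = (\<integral>\<^sup>+s. radial_kernel \<gamma> z s \<partial>lborel) * f z"
        by (rule nn_integral_multc) (unfold radial_kernel_def, measurable)
      then show ?thesis
        unfolding nn_integral_radial_kernel[OF g that] by simp
    qed
    show "AE z in lborel. f z = (\<integral>\<^sup>+s. radial_kernel \<gamma> z s * f z \<partial>lborel)"
      using AE_lborel_singleton[of 0] by (rule AE_mp) (auto intro: kernel)
  qed
  also have "\<dots> = (\<integral>\<^sup>+s. \<integral>\<^sup>+z. radial_kernel \<gamma> z s * f z \<partial>lborel \<partial>lborel)"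
    by (rule lborel_pair.Fubini'[symmetric]) (unfold radial_kernel_def, measurable)
  also have "\<dots> = (\<integral>\<^sup>+s. \<integral>\<^sup>+w. indicator {0<..} s * ennreal (s powr (Q - 1)) *
                     (indicator (gauge_shell \<gamma>) w * f (dilation \<gamma> s w)) \<partial>lborel \<partial>lborel)"
    unfolding nn_integral_radial_kernel_dilation[OF g assms(2)] Q_def
    by (intro nn_integral_cong nn_integral_cmult[symmetric]) measurable
  also have "\<dots> = (\<integral>\<^sup>+w. \<integral>\<^sup>+s. indicator {0<..} s * ennreal (s powr (Q - 1)) *
                     (indicator (gauge_shell \<gamma>) w * f (dilation \<gamma> s w)) \<partial>lborel \<partial>lborel)"
    by (rule lborel_pair.Fubini') measurable
  also have "\<dots> = (\<integral>\<^sup>+w. indicator (gauge_shell \<gamma>) w * (\<integral>\<^sup>+s. indicator {0<..} s *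
                     ennreal (s powr (Q - 1)) * f (dilation \<gamma> s w) \<partial>lborel) \<partial>lborel)"
    by (intro nn_integral_cong, subst nn_integral_cmult[symmetric]) (measurable, simp add: ac_simps)
  finally show ?thesis unfolding Q_def .
qed

section \<open>A one-dimensional Hardy inequality with logarithmic remainder\<close>

definition hardy_rhs_1d :: "real \<Rightarrow> real \<Rightarrow> (real \<Rightarrow> real) \<Rightarrow> real \<Rightarrow> real" where
  "hardy_rhs_1d \<beta> R u s =
     (\<beta> / 2)\<^sup>2 * (s powr (\<beta> - 1) * (u s)\<^sup>2) + 1 / 4 * (s powr (\<beta> - 1) * (u s)\<^sup>2 / (ln (R / s))\<^sup>2)"

definition hardy_lhs_1d :: "real \<Rightarrow> (real \<Rightarrow> real) \<Rightarrow> real \<Rightarrow> real" where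
  "hardy_lhs_1d \<beta> v s = s powr (\<beta> + 1) * (v s)\<^sup>2"

lemma hardy_rhs_1d_nonneg: "hardy_rhs_1d \<beta> R u s \<ge> 0"
  by (simp add: hardy_rhs_1d_def)

lemma hardy_lhs_1d_nonneg: "hardy_lhs_1d \<beta> v s \<ge> 0"
  by (simp add: hardy_lhs_1d_def)

lemma continuous_on_hardy_1d:
  assumes S: "S \<subseteq> {0<..<R}"
  shows "continuous_on S u \<Longrightarrow> continuous_on S (hardy_rhs_1d \<beta> R u)"
    and "continuous_on S v \<Longrightarrow> continuous_on S (hardy_lhs_1d \<beta> v)"
proof -
  have pos: "s > 0" "R / s > 1" if "s \<in> S" for s
    using that S by auto
  show "continuous_on S u \<Longrightarrow> continuous_on S (hardy_rhs_1d \<beta> R u)"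
    unfolding hardy_rhs_1d_def using pos
    by (intro continuous_intros) (auto dest!: pos(2) simp del: less_divide_eq_1_pos)
  show "continuous_on S v \<Longrightarrow> continuous_on S (hardy_lhs_1d \<beta> v)"
    unfolding hardy_lhs_1d_def using pos by (intro continuous_intros) auto
qed

(* The calibrating potential H(s) = -s^\<beta> (\<beta>/2 + 1/(2 ln(R/s))): the inequality is obtained by
   completing a square against (H u\<^sup>2)'. *)
definition hardy_potential :: "real \<Rightarrow> real \<Rightarrow> real \<Rightarrow> real" where
  "hardy_potential \<beta> R s = - (s powr \<beta> * (\<beta> / 2 + 1 / (2 * ln (R / s))))"

lemma hardy_potential_has_derivative:
  assumes s: "0 < s" "s < R"
  defines "L \<equiv> ln (R / s)"
  shows "(hardy_potential \<beta> R has_real_derivative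
           - (\<beta> * s powr \<beta> / s * (\<beta> / 2 + 1 / (2 * L)) + s powr \<beta> / (2 * s * L\<^sup>2))) (at s)"
proof -
  define q where "q s = \<beta> / 2 + 1 / (2 * ln (R / s))" for s
  have L: "L > 0" using s by (simp add: L_def)
  have "((\<lambda>s. ln (R / s)) has_real_derivative - 1 / s) (at s)"
    using s by (auto intro!: derivative_eq_intros simp: field_simps)
  then have dq: "(q has_real_derivative 1 / (2 * s * L\<^sup>2)) (at s)"
    unfolding q_def using s L unfolding L_def
    by (auto intro!: derivative_eq_intros simp: field_simps power2_eq_square)
  have dp: "((\<lambda>s. s powr \<beta>) has_real_derivative \<beta> * s powr \<beta> / s) (at s)"
    using has_real_derivative_powr[OF s(1), of \<beta>] s by (simp add: powr_diff)
  have "hardy_potential \<beta> R = (\<lambda>s. - (s powr \<beta> * q s))"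
    by (simp add: hardy_potential_def q_def fun_eq_iff)
  with DERIV_minus[OF DERIV_mult[OF dp dq]] show ?thesis
    by (simp add: q_def L_def algebra_simps)
qed

(* Pointwise, hardy_rhs + (H u\<^sup>2)' \<le> hardy_lhs: the difference is s^{\<beta>+1} (u' + q u/s)\<^sup>2 \<ge> 0,
   where q = \<beta>/2 + 1/(2L).  Here P stands for s^\<beta>. *)
lemma hardy_square_completion:
  fixes P s L \<beta> u v :: real
  assumes s: "s > 0" and L: "L > 0" and P: "P \<ge> 0"
  defines "q \<equiv> \<beta> / 2 + 1 / (2 * L)"
  shows "(\<beta> / 2)\<^sup>2 * (P / s * u\<^sup>2) + 1 / 4 * (P / s * u\<^sup>2 / L\<^sup>2)
           - (\<beta> * P / s * q + P / (2 * s * L\<^sup>2)) * u\<^sup>2 - P * q * (2 * u * v) \<le> P * s * v\<^sup>2"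
proof -
  have "P * s * v\<^sup>2 - ((\<beta> / 2)\<^sup>2 * (P / s * u\<^sup>2) + 1 / 4 * (P / s * u\<^sup>2 / L\<^sup>2)
          - (\<beta> * P / s * q + P / (2 * s * L\<^sup>2)) * u\<^sup>2 - P * q * (2 * u * v)) = P * s * (v + q * u / s)\<^sup>2"
    using s L unfolding q_def by (simp add: field_simps power2_eq_square)
  moreover have "P * s * (v + q * u / s)\<^sup>2 \<ge> 0" using s P by simp
  ultimately show ?thesis by linarith
qed

(* The inequality on a compact interval [\<epsilon>, b]: integrate the pointwise bound and use that the
   boundary term H(b) u(b)\<^sup>2 - H(\<epsilon>) u(\<epsilon>)\<^sup>2 is nonnegative since u(b) = 0 and H \<le> 0. *)
lemma hardy_log_interval:
  fixes u v :: "real \<Rightarrow> real"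
  assumes \<beta>: "\<beta> > 0" and \<epsilon>: "0 < \<epsilon>" "\<epsilon> \<le> b" and bR: "b < R"
    and du: "\<And>s. s \<in> {\<epsilon>..b} \<Longrightarrow> (u has_real_derivative v s) (at s)"
    and cu: "continuous_on {\<epsilon>..b} u" and cv: "continuous_on {\<epsilon>..b} v"
    and ub: "u b = 0"
  shows "integral {\<epsilon>..b} (hardy_rhs_1d \<beta> R u) \<le> integral {\<epsilon>..b} (hardy_lhs_1d \<beta> v)"
proof -
  have S: "{\<epsilon>..b} \<subseteq> {0<..<R}" using \<epsilon> bR by auto
  define \<Phi> where "\<Phi> s = hardy_potential \<beta> R s * (u s)\<^sup>2" for s
  define \<Phi>' where "\<Phi>' s = - (\<beta> * s powr \<beta> / s * (\<beta> / 2 + 1 / (2 * ln (R / s)))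
                             + s powr \<beta> / (2 * s * (ln (R / s))\<^sup>2)) * (u s)\<^sup>2
                         + hardy_potential \<beta> R s * (2 * u s * v s)" for s
  have "(\<Phi>' has_integral (\<Phi> b - \<Phi> \<epsilon>)) {\<epsilon>..b}"
  proof (rule fundamental_theorem_of_calculus[OF \<epsilon>(2)])
    fix s assume s: "s \<in> {\<epsilon>..b}"
    have "((\<lambda>s. (u s)\<^sup>2) has_real_derivative 2 * u s * v s) (at s)"
      using du[OF s] by (auto intro!: derivative_eq_intros)
    then have "(\<Phi> has_real_derivative \<Phi>' s) (at s)"
      unfolding \<Phi>_def \<Phi>'_def using S s
      by (auto intro!: DERIV_mult[OF hardy_potential_has_derivative, THEN DERIV_cong] simp: algebra_simps)
    then show "(\<Phi> has_vector_derivative \<Phi>' s) (at s within {\<epsilon>..b})"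
      by (simp add: has_real_derivative_iff_has_vector_derivative[symmetric] has_field_derivative_at_within)
  qed
  then have int_\<Phi>': "\<Phi>' integrable_on {\<epsilon>..b}" and val_\<Phi>': "integral {\<epsilon>..b} \<Phi>' = \<Phi> b - \<Phi> \<epsilon>"
    by (auto dest: integral_unique)
  have "hardy_potential \<beta> R \<epsilon> \<le> 0"
    using \<epsilon> bR \<beta> by (simp add: hardy_potential_def)
  then have boundary: "\<Phi> b - \<Phi> \<epsilon> \<ge> 0"
    unfolding \<Phi>_def using ub by (simp add: mult_nonpos_nonneg)
  have int_rhs: "hardy_rhs_1d \<beta> R u integrable_on {\<epsilon>..b}"
    using continuous_on_hardy_1d(1)[OF S cu] by (rule integrable_continuous_interval)
  have int_lhs: "hardy_lhs_1d \<beta> v integrable_on {\<epsilon>..b}"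
    using continuous_on_hardy_1d(2)[OF S cv] by (rule integrable_continuous_interval)
  have pointwise: "hardy_rhs_1d \<beta> R u s + \<Phi>' s \<le> hardy_lhs_1d \<beta> v s" if s: "s \<in> {\<epsilon>..b}" for s
  proof -
    have s0: "s > 0" and L: "ln (R / s) > 0" using s S by auto
    have "s powr (\<beta> - 1) = s powr \<beta> / s" "s powr (\<beta> + 1) = s powr \<beta> * s"
      using s0 by (simp_all add: powr_diff powr_add)
    then show ?thesis
      using hardy_square_completion[OF s0 L, of "s powr \<beta>" \<beta> "u s" "v s"]
      unfolding hardy_rhs_1d_def hardy_lhs_1d_def \<Phi>'_def hardy_potential_def
      by (simp add: algebra_simps)
  qed
  have "integral {\<epsilon>..b} (hardy_rhs_1d \<beta> R u) + (\<Phi> b - \<Phi> \<epsilon>)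
      = integral {\<epsilon>..b} (\<lambda>s. hardy_rhs_1d \<beta> R u s + \<Phi>' s)"
    using integral_add[OF int_rhs int_\<Phi>'] val_\<Phi>' by simp
  also have "\<dots> \<le> integral {\<epsilon>..b} (hardy_lhs_1d \<beta> v)"
    by (rule integral_le[OF integrable_add[OF int_rhs int_\<Phi>'] int_lhs pointwise])
  finally show ?thesis using boundary by linarith
qed

(* To bound an integral over (0, b] it suffices to bound the integrals over [\<epsilon>, b], \<epsilon> > 0
   (monotone convergence along \<epsilon> = 1/(n+1)). *)
lemma nn_integral_halfopen_le:
  fixes f :: "real \<Rightarrow> ennreal"
  assumes f [measurable]: "(\<lambda>s. f s * indicator {0<..b} s) \<in> borel_measurable borel"
    and bound: "\<And>\<epsilon>. 0 < \<epsilon> \<Longrightarrow> \<epsilon> \<le> b \<Longrightarrow> (\<integral>\<^sup>+s. f s * indicator {\<epsilon>..b} s \<partial>lborel) \<le> X"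
  shows "(\<integral>\<^sup>+s. f s * indicator {0<..b} s \<partial>lborel) \<le> X"
proof -
  define g where "g n s = f s * indicator {0<..b} s * indicator {1 / real (Suc n)..} s" for n s
  have g_eq: "g n = (\<lambda>s. f s * indicator {1 / real (Suc n)..b} s)" for n
    by (auto simp: g_def fun_eq_iff indicator_def intro: less_le_trans[of 0 "1 / real (Suc n)"])
  have "incseq g"
  proof (intro incseq_SucI le_funI)
    fix n s
    have "1 / real (Suc (Suc n)) \<le> 1 / real (Suc n)" by (simp add: frac_le)
    then show "g n s \<le> g (Suc n) s" by (auto simp: g_def indicator_def)
  qed
  moreover have "(SUP n. g n s) = f s * indicator {0<..b} s" for s
  proof (cases "s > 0")
    case False
    then show ?thesis by (simp add: g_def)
  next
    case True
    obtain N where N: "inverse (real (Suc N)) < s" using reals_Archimedean[OF True] by blast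
    have "g n s \<le> f s * indicator {0<..b} s" for n
      by (simp add: g_def indicator_def)
    moreover have "g N s = f s * indicator {0<..b} s"
      using N by (simp add: g_def indicator_def inverse_eq_divide)
    ultimately show ?thesis
      by (intro antisym SUP_least) (auto intro: SUP_upper2[of N])
  qed
  ultimately have "(\<integral>\<^sup>+s. f s * indicator {0<..b} s \<partial>lborel) = (SUP n. \<integral>\<^sup>+s. g n s \<partial>lborel)"
    using nn_integral_monotone_convergence_SUP[of g lborel] by (simp add: g_def[abs_def])
  also have "\<dots> \<le> X"
  proof (rule SUP_least)
    fix n
    show "(\<integral>\<^sup>+s. g n s \<partial>lborel) \<le> X"
    proof (cases "1 / real (Suc n) \<le> b")
      case True
      then show ?thesis unfolding g_eq by (intro bound) auto
    next
      case False
      then show ?thesis unfolding g_eq by simp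
    qed
  qed
  finally show ?thesis .
qed

lemma borel_measurable_ennreal_indicator:
  fixes g :: "real \<Rightarrow> real"
  assumes "A \<in> sets borel" and "continuous_on A g"
  shows "(\<lambda>s. ennreal (g s) * indicator A s) \<in> borel_measurable borel"
proof -
  have "(\<lambda>s. indicator A s *\<^sub>R g s) \<in> borel_measurable borel"
    using assms by (rule borel_measurable_continuous_on_indicator)
  moreover have "(\<lambda>s. ennreal (g s) * indicator A s) = (\<lambda>s. ennreal (indicator A s *\<^sub>R g s))"
    by (auto simp: fun_eq_iff indicator_def)
  ultimately show ?thesis by simp
qed

lemma hardy_log_1d:
  fixes u v :: "real \<Rightarrow> real"
  assumes \<beta>: "\<beta> > 0" and b: "0 < b" "b < R"
    and du: "\<And>s. s \<in> {0<..b} \<Longrightarrow> (u has_real_derivative v s) (at s)"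
    and cv: "continuous_on {0<..b} v" and ub: "u b = 0"
  shows "(\<integral>\<^sup>+s. ennreal (hardy_rhs_1d \<beta> R u s) * indicator {0<..b} s \<partial>lborel)
       \<le> (\<integral>\<^sup>+s. ennreal (hardy_lhs_1d \<beta> v s) * indicator {0<..b} s \<partial>lborel)"
proof (rule nn_integral_halfopen_le)
  have S: "{0<..b} \<subseteq> {0<..<R}" using b by auto
  have cu: "continuous_on {0<..b} u"
    using du by (intro continuous_at_imp_continuous_on ballI) (auto intro: DERIV_isCont)
  show "(\<lambda>s. ennreal (hardy_rhs_1d \<beta> R u s) * indicator {0<..b} s) \<in> borel_measurable borel"
    by (intro borel_measurable_ennreal_indicator continuous_on_hardy_1d(1)[OF S cu]) simp
  fix \<epsilon> assume \<epsilon>: "0 < \<epsilon>" "\<epsilon> \<le> b"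
  have sub: "{\<epsilon>..b} \<subseteq> {0<..b}" using \<epsilon> by auto
  have int: "((\<lambda>s. F s) has_integral integral {\<epsilon>..b} F) {\<epsilon>..b}"
    if "continuous_on {\<epsilon>..b} F" for F :: "real \<Rightarrow> real"
    using integrable_continuous_interval[OF that] by (simp add: integrable_integral)
  have cu': "continuous_on {\<epsilon>..b} u" and cv': "continuous_on {\<epsilon>..b} v"
    using continuous_on_subset[OF cu sub] continuous_on_subset[OF cv sub] .
  have "(\<integral>\<^sup>+s. ennreal (hardy_rhs_1d \<beta> R u s) * indicator {\<epsilon>..b} s \<partial>lborel)
      = ennreal (integral {\<epsilon>..b} (hardy_rhs_1d \<beta> R u))"
    using S sub by (intro nn_integral_has_integral_lebesgue' hardy_rhs_1d_nonneg int
                          continuous_on_hardy_1d(1)[OF _ cu']) auto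
  also have "\<dots> \<le> ennreal (integral {\<epsilon>..b} (hardy_lhs_1d \<beta> v))"
    using sub by (intro ennreal_leI hardy_log_interval[OF \<beta> \<epsilon> b(2) du cu' cv' ub]) auto
  also have "\<dots> = (\<integral>\<^sup>+s. ennreal (hardy_lhs_1d \<beta> v s) * indicator {\<epsilon>..b} s \<partial>lborel)"
    using S sub by (intro nn_integral_has_integral_lebesgue'[symmetric] hardy_lhs_1d_nonneg int
                          continuous_on_hardy_1d(2)[OF _ cv']) auto
  also have "\<dots> \<le> (\<integral>\<^sup>+s. ennreal (hardy_lhs_1d \<beta> v s) * indicator {0<..b} s \<partial>lborel)"
    using sub by (intro nn_integral_mono mult_left_mono) (auto simp: indicator_def)
  finally show "(\<integral>\<^sup>+s. ennreal (hardy_rhs_1d \<beta> R u s) * indicator {\<epsilon>..b} s \<partial>lborel)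
      \<le> (\<integral>\<^sup>+s. ennreal (hardy_lhs_1d \<beta> v s) * indicator {0<..b} s \<partial>lborel)" .
qed

section \<open>Reduction to the dilation orbits\<close>

definition energy_density ::
  "real \<Rightarrow> real \<Rightarrow> real \<Rightarrow> ((real^'m::finite) \<times> (real^'k::finite) \<Rightarrow> real) \<Rightarrow> (real^'m) \<times> (real^'k) \<Rightarrow> real"
  where "energy_density \<gamma> \<alpha> t \<phi> z = gauge \<gamma> z powr \<alpha> * grad_gauge_norm \<gamma> z powr t * grushin_grad_sq \<gamma> \<phi> z"

definition hardy_weight :: "real \<Rightarrow> real \<Rightarrow> real \<Rightarrow> (real^'m::finite) \<times> (real^'k::finite) \<Rightarrow> real"
  where "hardy_weight \<gamma> \<alpha> t z = gauge \<gamma> z powr (\<alpha> - 2) * grad_gauge_norm \<gamma> z powr (t + 2)"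

definition hardy_density ::
  "real \<Rightarrow> real \<Rightarrow> real \<Rightarrow> real \<Rightarrow> ((real^'m::finite) \<times> (real^'k::finite) \<Rightarrow> real) \<Rightarrow> (real^'m) \<times> (real^'k) \<Rightarrow> real"
  where "hardy_density \<gamma> \<alpha> t r \<phi> z =
           ((hom_dim \<gamma> TYPE('m) TYPE('k) + \<alpha> - 2) / 2)\<^sup>2 * (hardy_weight \<gamma> \<alpha> t z * (\<phi> z)\<^sup>2)
           + 1 / 4 * (hardy_weight \<gamma> \<alpha> t z * (\<phi> z)\<^sup>2 / (ln (r / gauge \<gamma> z))\<^sup>2)"

definition orbit_derivative ::
  "real \<Rightarrow> ((real^'m::finite) \<times> (real^'k::finite) \<Rightarrow> real) \<Rightarrow> (real^'m) \<times> (real^'k) \<Rightarrow> real \<Rightarrow> real"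
  where "orbit_derivative \<gamma> \<phi> w s =
           frechet_derivative \<phi> (at (dilation \<gamma> s w)) (fst w, ((1 + \<gamma>) * s powr \<gamma>) *\<^sub>R snd w)"

lemma orbit_has_derivative:
  assumes d: "(\<phi> has_derivative frechet_derivative \<phi> (at (dilation \<gamma> s w))) (at (dilation \<gamma> s w))"
    and s: "s > 0"
  shows "((\<lambda>s. \<phi> (dilation \<gamma> s w)) has_real_derivative orbit_derivative \<gamma> \<phi> w s) (at s)"
proof -
  let ?v = "(fst w, ((1 + \<gamma>) * s powr \<gamma>) *\<^sub>R snd w)"
  let ?D = "frechet_derivative \<phi> (at (dilation \<gamma> s w))"
  have "((\<lambda>s. dilation \<gamma> s w) has_derivative (\<lambda>h. h *\<^sub>R ?v)) (at s)"
    using dilation_has_vector_derivative[OF s] unfolding has_vector_derivative_def .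
  from diff_chain_at[OF this d]
  have "((\<phi> \<circ> (\<lambda>s. dilation \<gamma> s w)) has_derivative (?D \<circ> (\<lambda>h. h *\<^sub>R ?v))) (at s)" .
  moreover have "?D (h *\<^sub>R ?v) = h * ?D ?v" for h
    using linear_cmul[OF has_derivative_linear[OF d], of h ?v] by (simp only: real_scaleR_def)
  ultimately show ?thesis
    unfolding orbit_derivative_def
    by (intro has_derivative_imp_has_field_derivative[where D = "?D \<circ> (\<lambda>h. h *\<^sub>R ?v)"])
       (simp_all only: o_def)
qed

lemma continuous_on_orbit_derivative:
  assumes lin: "\<And>z. linear (frechet_derivative \<phi> (at z))"
    and cD: "\<And>v. continuous_on UNIV (\<lambda>z. frechet_derivative \<phi> (at z) v)"
  shows "continuous_on {0<..} (orbit_derivative \<gamma> \<phi> w)"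
proof -
  have split: "orbit_derivative \<gamma> \<phi> w s = frechet_derivative \<phi> (at (dilation \<gamma> s w)) (fst w, 0)
                 + ((1 + \<gamma>) * s powr \<gamma>) * frechet_derivative \<phi> (at (dilation \<gamma> s w)) (0, snd w)" for s
  proof -
    have "(fst w, ((1 + \<gamma>) * s powr \<gamma>) *\<^sub>R snd w) = (fst w, 0) + ((1 + \<gamma>) * s powr \<gamma>) *\<^sub>R (0, snd w)"
      by simp
    then show ?thesis
      unfolding orbit_derivative_def by (simp only: linear_add[OF lin] linear_cmul[OF lin] real_scaleR_def)
  qed
  have orbit: "continuous_on {0<..} (\<lambda>s. dilation \<gamma> s w)"
    unfolding dilation_def by (intro continuous_intros) auto
  have "continuous_on {0<..} (\<lambda>s. frechet_derivative \<phi> (at (dilation \<gamma> s w)) v)" for v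
    by (rule continuous_on_compose2[OF cD orbit]) auto
  then show ?thesis
    unfolding split[abs_def] by (intro continuous_intros) auto
qed

lemma hardy_density_along_orbit:
  fixes w :: "(real^'m::finite) \<times> (real^'k::finite)"
  assumes g: "\<gamma> > 0" and s: "s > 0" and \<rho>: "gauge \<gamma> w > 0"
  shows "s powr (hom_dim \<gamma> TYPE('m) TYPE('k) - 1) * hardy_density \<gamma> \<alpha> t r \<phi> (dilation \<gamma> s w)
       = hardy_weight \<gamma> \<alpha> t w *
           hardy_rhs_1d (hom_dim \<gamma> TYPE('m) TYPE('k) + \<alpha> - 2) (r / gauge \<gamma> w) (\<lambda>s. \<phi> (dilation \<gamma> s w)) s"
proof -
  define Q where "Q = hom_dim \<gamma> TYPE('m) TYPE('k)"
  have e1: "s powr (Q + \<alpha> - 2 - 1) = s powr (Q - 1) * s powr (\<alpha> - 2)"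
    by (simp add: powr_add[symmetric])
  have e2: "(s * gauge \<gamma> w) powr (\<alpha> - 2) = s powr (\<alpha> - 2) * gauge \<gamma> w powr (\<alpha> - 2)"
    using s \<rho> by (simp add: powr_mult)
  have e3: "r / (s * gauge \<gamma> w) = r / gauge \<gamma> w / s" by simp
  show ?thesis
    unfolding hardy_density_def hardy_weight_def hardy_rhs_1d_def Q_def[symmetric]
      gauge_dilation[OF g s] grad_gauge_norm_dilation[OF g s] e1 e2 e3
    by (simp add: algebra_simps)
qed

(* Conversely the energy dominates the one-dimensional left-hand side, by the pointwise
   Cauchy--Schwarz bound applied to the orbit derivative. *)
lemma energy_density_along_orbit:
  fixes w :: "(real^'m::finite) \<times> (real^'k::finite)"
  assumes g: "\<gamma> > 0" and s: "s > 0" and x: "fst w \<noteq> 0"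
    and lin: "linear (frechet_derivative \<phi> (at (dilation \<gamma> s w)))"
  shows "hardy_weight \<gamma> \<alpha> t w *
           hardy_lhs_1d (hom_dim \<gamma> TYPE('m) TYPE('k) + \<alpha> - 2) (orbit_derivative \<gamma> \<phi> w) s
       \<le> s powr (hom_dim \<gamma> TYPE('m) TYPE('k) - 1) * energy_density \<gamma> \<alpha> t \<phi> (dilation \<gamma> s w)"
proof -
  define Q where "Q = hom_dim \<gamma> TYPE('m) TYPE('k)"
  define z where "z = dilation \<gamma> s w"
  define D where "D = frechet_derivative \<phi> (at z)"
  define \<rho> where "\<rho> = gauge \<gamma> w"
  define h where "h = grad_gauge_norm \<gamma> w"
  define v where "v = orbit_derivative \<gamma> \<phi> w s"
  have \<rho>: "\<rho> > 0" using gauge_pos[OF g] x by (metis \<rho>_def fst_zero)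
  have h: "h > 0" using x \<rho> by (simp add: h_def \<rho>_def grad_gauge_norm_def)
  have fz: "fst z \<noteq> 0" using x s by (simp add: z_def dilation_def)
  have "(fst z, (1 + \<gamma>) *\<^sub>R snd z) = s *\<^sub>R (fst w, ((1 + \<gamma>) * s powr \<gamma>) *\<^sub>R snd w)"
    using s by (simp add: z_def dilation_def powr_add)
  then have Dz: "D (fst z, (1 + \<gamma>) *\<^sub>R snd z) = s * v"
    using linear_cmul[OF lin, of s] unfolding D_def z_def v_def orbit_derivative_def
    by (simp only: real_scaleR_def)
  have bound: "h\<^sup>2 * (s * v)\<^sup>2 / (s * \<rho>)\<^sup>2 \<le> grushin_grad_sq \<gamma> \<phi> z"
    using radial_derivative_le_grushin_grad[OF lin[folded z_def] g fz]
    unfolding Dz[unfolded D_def] grushin_grad_sq_def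
    by (simp add: z_def h_def \<rho>_def gauge_dilation[OF g s] grad_gauge_norm_dilation[OF g s])
  define M where "M = s powr (Q - 1) * ((s * \<rho>) powr \<alpha> * h powr t)"
  have "hardy_weight \<gamma> \<alpha> t w * hardy_lhs_1d (Q + \<alpha> - 2) (orbit_derivative \<gamma> \<phi> w) s
      = M * (h\<^sup>2 * (s * v)\<^sup>2 / (s * \<rho>)\<^sup>2)"
  proof -
    have e1: "s powr (Q + \<alpha> - 2 + 1) = s powr (Q - 1) * s powr \<alpha>"
      by (subst powr_add[symmetric]) (simp add: algebra_simps)
    have e2: "(s * \<rho>) powr \<alpha> = s powr \<alpha> * \<rho> powr \<alpha>" using s \<rho> by (simp add: powr_mult)
    have e3: "\<rho> powr (\<alpha> - 2) = \<rho> powr \<alpha> / \<rho>\<^sup>2" using \<rho> by (simp add: powr_diff)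
    have e4: "h powr (t + 2) = h powr t * h\<^sup>2" using h by (simp add: powr_add)
    show ?thesis
      unfolding hardy_weight_def hardy_lhs_1d_def M_def e1 e2 \<rho>_def[symmetric] h_def[symmetric]
        v_def[symmetric] e3 e4
      using s \<rho> h by (simp add: field_simps power2_eq_square)
  qed
  also have "\<dots> \<le> M * grushin_grad_sq \<gamma> \<phi> z"
    using bound by (rule mult_left_mono) (simp add: M_def)
  also have "\<dots> = s powr (Q - 1) * energy_density \<gamma> \<alpha> t \<phi> z"
    by (simp add: M_def energy_density_def z_def \<rho>_def h_def gauge_dilation[OF g s]
                  grad_gauge_norm_dilation[OF g s] mult.assoc)
  finally show ?thesis unfolding Q_def z_def .
qed

definition orbit_integrand ::
  "real \<Rightarrow> real \<Rightarrow> ((real^'m::finite) \<times> (real^'k::finite) \<Rightarrow> real) \<Rightarrow> (real^'m) \<times> (real^'k) \<Rightarrow> real \<Rightarrow> ennreal"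
  where "orbit_integrand \<gamma> r F w s =
           indicator {0<..} s * ennreal (s powr (hom_dim \<gamma> TYPE('m) TYPE('k) - 1)) *
             (ennreal (F (dilation \<gamma> s w)) * indicator (gauge_ball \<gamma> r) (dilation \<gamma> s w))"

lemma dilation_in_gauge_ball:
  assumes g: "\<gamma> > 0" and s: "s > 0"
  shows "dilation \<gamma> s w \<in> gauge_ball \<gamma> r \<longleftrightarrow> s * gauge \<gamma> w < r"
  by (simp add: gauge_ball_def gauge_dilation[OF g s])

lemma orbit_support:
  assumes g: "\<gamma> > 0" and \<rho>: "gauge \<gamma> w > 0" and supp: "\<And>z. \<phi> z \<noteq> 0 \<Longrightarrow> gauge \<gamma> z < r'"
    and s: "r' / gauge \<gamma> w \<le> s"
  shows "\<phi> (dilation \<gamma> s w) = 0"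
proof (rule ccontr)
  assume "\<phi> (dilation \<gamma> s w) \<noteq> 0"
  then have lt: "gauge \<gamma> (dilation \<gamma> s w) < r'" by (rule supp)
  then have "0 < r' / gauge \<gamma> w"
    using gauge_nonneg[of \<gamma> "dilation \<gamma> s w"] \<rho> by simp
  then have s0: "s > 0" using s by linarith
  have "r' \<le> s * gauge \<gamma> w" using s \<rho> by (simp add: divide_le_eq)
  then show False using lt gauge_dilation[OF g s0, of w] by linarith
qed

lemma hardy_side_along_orbit:
  fixes \<phi> :: "(real^'m::finite) \<times> (real^'k::finite) \<Rightarrow> real" and w :: "(real^'m) \<times> (real^'k)"
  assumes g: "\<gamma> > 0" and \<rho>: "gauge \<gamma> w > 0" and r': "r' < r"
    and supp: "\<And>z. \<phi> z \<noteq> 0 \<Longrightarrow> gauge \<gamma> z < r'"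
  shows "orbit_integrand \<gamma> r (hardy_density \<gamma> \<alpha> t r \<phi>) w s
       = ennreal (hardy_weight \<gamma> \<alpha> t w) *
           (ennreal (hardy_rhs_1d (hom_dim \<gamma> TYPE('m) TYPE('k) + \<alpha> - 2) (r / gauge \<gamma> w)
                       (\<lambda>s. \<phi> (dilation \<gamma> s w)) s) * indicator {0<..r' / gauge \<gamma> w} s)"
proof (cases "s \<in> {0<..r' / gauge \<gamma> w}")
  case True
  then have "s * gauge \<gamma> w < r" using \<rho> r' by (simp add: le_divide_eq)
  then have "orbit_integrand \<gamma> r (hardy_density \<gamma> \<alpha> t r \<phi>) w s
      = ennreal (s powr (hom_dim \<gamma> TYPE('m) TYPE('k) - 1) * hardy_density \<gamma> \<alpha> t r \<phi> (dilation \<gamma> s w))"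
    using True by (simp add: orbit_integrand_def dilation_in_gauge_ball[OF g] ennreal_mult')
  also have "\<dots> = ennreal (hardy_weight \<gamma> \<alpha> t w * hardy_rhs_1d (hom_dim \<gamma> TYPE('m) TYPE('k) + \<alpha> - 2)
                       (r / gauge \<gamma> w) (\<lambda>s. \<phi> (dilation \<gamma> s w)) s)"
    using hardy_density_along_orbit[OF g _ \<rho>] True by simp
  finally show ?thesis
    using True by (simp add: ennreal_mult' hardy_weight_def)
next
  case False
  then have "s \<le> 0 \<or> r' / gauge \<gamma> w \<le> s" by auto
  then show ?thesis
    using False orbit_support[where \<phi> = \<phi>, OF g \<rho> supp]
    by (auto simp: orbit_integrand_def hardy_density_def)
qed

lemma energy_side_along_orbit:
  fixes \<phi> :: "(real^'m::finite) \<times> (real^'k::finite) \<Rightarrow> real" and w :: "(real^'m) \<times> (real^'k)"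
  assumes g: "\<gamma> > 0" and x: "fst w \<noteq> 0" and r': "r' < r"
    and lin: "\<And>z. linear (frechet_derivative \<phi> (at z))"
  shows "ennreal (hardy_weight \<gamma> \<alpha> t w) *
           (ennreal (hardy_lhs_1d (hom_dim \<gamma> TYPE('m) TYPE('k) + \<alpha> - 2) (orbit_derivative \<gamma> \<phi> w) s)
            * indicator {0<..r' / gauge \<gamma> w} s)
       \<le> orbit_integrand \<gamma> r (energy_density \<gamma> \<alpha> t \<phi>) w s"
proof (cases "s \<in> {0<..r' / gauge \<gamma> w}")
  case True
  have \<rho>: "gauge \<gamma> w > 0" using gauge_pos[OF g] x by (metis fst_zero)
  then have "s * gauge \<gamma> w < r" using True r' by (simp add: le_divide_eq)
  moreover have "hardy_weight \<gamma> \<alpha> t w *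
                   hardy_lhs_1d (hom_dim \<gamma> TYPE('m) TYPE('k) + \<alpha> - 2) (orbit_derivative \<gamma> \<phi> w) s
      \<le> s powr (hom_dim \<gamma> TYPE('m) TYPE('k) - 1) * energy_density \<gamma> \<alpha> t \<phi> (dilation \<gamma> s w)"
    using energy_density_along_orbit[OF g _ x lin] True by simp
  ultimately show ?thesis
    using True by (simp add: orbit_integrand_def dilation_in_gauge_ball[OF g] hardy_weight_def
                             ennreal_mult'[symmetric] ennreal_leI)
qed simp

(* On orbits inside {x = 0} the weight |\<nabla>_\<gamma>\<rho>| vanishes; otherwise this is
   the one-dimensional inequality on (0, r'/\<rho>(w)]. *)
lemma orbit_inequality:
  fixes \<phi> :: "(real^'m::finite) \<times> (real^'k::finite) \<Rightarrow> real" and w :: "(real^'m) \<times> (real^'k)"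
  assumes g: "\<gamma> > 0" and \<beta>: "hom_dim \<gamma> TYPE('m) TYPE('k) + \<alpha> - 2 > 0"
    and diff: "\<And>z. (\<phi> has_derivative frechet_derivative \<phi> (at z)) (at z)"
    and cD: "\<And>v. continuous_on UNIV (\<lambda>z. frechet_derivative \<phi> (at z) v)"
    and r': "0 < r'" "r' < r" and supp: "\<And>z. \<phi> z \<noteq> 0 \<Longrightarrow> gauge \<gamma> z < r'"
  shows "(\<integral>\<^sup>+s. orbit_integrand \<gamma> r (hardy_density \<gamma> \<alpha> t r \<phi>) w s \<partial>lborel)
       \<le> (\<integral>\<^sup>+s. orbit_integrand \<gamma> r (energy_density \<gamma> \<alpha> t \<phi>) w s \<partial>lborel)"
proof (cases "fst w = 0")
  case True
  then have "grad_gauge_norm \<gamma> w = 0"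
    using g by (simp add: grad_gauge_norm_def)
  then have "orbit_integrand \<gamma> r (hardy_density \<gamma> \<alpha> t r \<phi>) w s = 0" for s
    by (cases "s > 0") (simp_all add: orbit_integrand_def hardy_density_def hardy_weight_def
                                     grad_gauge_norm_dilation[OF g])
  then show ?thesis by (simp only: nn_integral_const mult_zero_left zero_le)
next
  case False
  define \<beta> where "\<beta> = hom_dim \<gamma> TYPE('m) TYPE('k) + \<alpha> - 2"
  define K where "K = ennreal (hardy_weight \<gamma> \<alpha> t w)"
  define R where "R = r / gauge \<gamma> w"
  define b where "b = r' / gauge \<gamma> w"
  define u where "u s = \<phi> (dilation \<gamma> s w)" for s
  define v where "v = orbit_derivative \<gamma> \<phi> w"
  have \<rho>: "gauge \<gamma> w > 0" using gauge_pos[OF g] False by (metis fst_zero)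
  have b: "0 < b" "b < R" using r' \<rho> by (simp_all add: b_def R_def divide_strict_right_mono)
  have lin: "linear (frechet_derivative \<phi> (at z))" for z
    using has_derivative_linear[OF diff] .
  have du: "(u has_real_derivative v s) (at s)" if "s \<in> {0<..b}" for s
    using orbit_has_derivative[OF diff] that by (simp add: u_def[abs_def] v_def)
  have cu: "continuous_on {0<..b} u"
    using du by (intro continuous_at_imp_continuous_on ballI) (auto intro: DERIV_isCont)
  have cv: "continuous_on {0<..b} v"
    using continuous_on_orbit_derivative[OF lin cD, of \<gamma> w] unfolding v_def[symmetric]
    by (rule continuous_on_subset) auto
  have S: "{0<..b} \<subseteq> {0<..<R}" using b by auto
  have [measurable]: "(\<lambda>s. ennreal (hardy_rhs_1d \<beta> R u s) * indicator {0<..b} s) \<in> borel_measurable borel"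
    "(\<lambda>s. ennreal (hardy_lhs_1d \<beta> v s) * indicator {0<..b} s) \<in> borel_measurable borel"
    by (intro borel_measurable_ennreal_indicator continuous_on_hardy_1d[OF S] cu cv; simp)+
  have "(\<integral>\<^sup>+s. orbit_integrand \<gamma> r (hardy_density \<gamma> \<alpha> t r \<phi>) w s \<partial>lborel)
      = (\<integral>\<^sup>+s. K * (ennreal (hardy_rhs_1d \<beta> R u s) * indicator {0<..b} s) \<partial>lborel)"
    using hardy_side_along_orbit[where \<phi> = \<phi>, OF g \<rho> r'(2) supp]
    by (intro nn_integral_cong) (simp add: K_def \<beta>_def R_def b_def u_def[abs_def])
  also have "\<dots> = K * (\<integral>\<^sup>+s. ennreal (hardy_rhs_1d \<beta> R u s) * indicator {0<..b} s \<partial>lborel)"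
    by (rule nn_integral_cmult) measurable
  also have "\<dots> \<le> K * (\<integral>\<^sup>+s. ennreal (hardy_lhs_1d \<beta> v s) * indicator {0<..b} s \<partial>lborel)"
    using \<beta> b du cv orbit_support[where \<phi> = \<phi>, OF g \<rho> supp, of b]
    by (intro mult_left_mono hardy_log_1d) (simp_all add: \<beta>_def u_def b_def)
  also have "\<dots> = (\<integral>\<^sup>+s. K * (ennreal (hardy_lhs_1d \<beta> v s) * indicator {0<..b} s) \<partial>lborel)"
    by (rule nn_integral_cmult[symmetric]) measurable
  also have "\<dots> \<le> (\<integral>\<^sup>+s. orbit_integrand \<gamma> r (energy_density \<gamma> \<alpha> t \<phi>) w s \<partial>lborel)"
    unfolding K_def \<beta>_def v_def b_def
    by (intro nn_integral_mono energy_side_along_orbit[OF g False r'(2) lin])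
  finally show ?thesis .
qed

section \<open>The Hardy inequality on gauge balls\<close>

lemma smooth_fun_C1:
  fixes \<phi> :: "'a::euclidean_space \<Rightarrow> real"
  assumes "smooth_fun \<phi>"
  shows "continuous_on UNIV \<phi>"
    and "\<And>z. (\<phi> has_derivative frechet_derivative \<phi> (at z)) (at z)"
    and "\<And>v. continuous_on UNIV (\<lambda>z. frechet_derivative \<phi> (at z) v)"
proof -
  have C1: "Ck_fun (Suc 0) \<phi>" using assms by (simp add: smooth_fun_def)
  then show "continuous_on UNIV \<phi>" by simp
  show "(\<phi> has_derivative frechet_derivative \<phi> (at z)) (at z)" for z
    using C1 by (simp add: differentiable_on_def frechet_derivative_works[symmetric])
  show "continuous_on UNIV (\<lambda>z. frechet_derivative \<phi> (at z) v)" for v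
    using C1 by simp
qed

lemma C0_infty_gauge_ball_support:
  fixes \<phi> :: "(real^'m::finite) \<times> (real^'k::finite) \<Rightarrow> real"
  assumes g: "\<gamma> > 0" and r: "r > 0" and C: "C0_infty (gauge_ball \<gamma> r) \<phi>"
  obtains r' where "0 < r'" "r' < r" "\<And>z. \<phi> z \<noteq> 0 \<Longrightarrow> gauge \<gamma> z < r'"
proof -
  define S where "S = closure {z. \<phi> z \<noteq> 0}"
  have S: "compact S" "S \<subseteq> gauge_ball \<gamma> r" using C unfolding C0_infty_def S_def by blast+
  have inS: "\<phi> z \<noteq> 0 \<Longrightarrow> z \<in> S" for z
    unfolding S_def by (rule subsetD[OF closure_subset]) simp
  show ?thesis
  proof (cases "S = {}")
    case True
    show ?thesis
    proof (rule that[of "r / 2"])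
      show "0 < r / 2" "r / 2 < r" using r by simp_all
      show "gauge \<gamma> z < r / 2" if "\<phi> z \<noteq> 0" for z
        using inS[OF that] True by simp
    qed
  next
    case False
    obtain z0 where z0: "z0 \<in> S" and max: "\<And>z. z \<in> S \<Longrightarrow> gauge \<gamma> z \<le> gauge \<gamma> z0"
      using continuous_attains_sup[OF S(1) False continuous_on_subset[OF continuous_on_gauge[OF g]]]
      by blast
    have lt: "gauge \<gamma> z0 < r" using z0 S(2) by (auto simp: gauge_ball_def)
    show ?thesis
    proof (rule that[of "(gauge \<gamma> z0 + r) / 2"])
      show "0 < (gauge \<gamma> z0 + r) / 2" "(gauge \<gamma> z0 + r) / 2 < r"
        using lt r gauge_nonneg[of \<gamma> z0] by simp_all
      show "gauge \<gamma> z < (gauge \<gamma> z0 + r) / 2" if "\<phi> z \<noteq> 0" for z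
        using max[OF inS[OF that]] lt by simp
    qed
  qed
qed

lemma density_measurable:
  fixes \<phi> :: "(real^'m::finite) \<times> (real^'k::finite) \<Rightarrow> real"
  assumes g: "\<gamma> > 0" and c\<phi>: "continuous_on UNIV \<phi>"
    and cD: "\<And>v. continuous_on UNIV (\<lambda>z. frechet_derivative \<phi> (at z) v)"
  shows "(\<lambda>z. ennreal (hardy_density \<gamma> \<alpha> t r \<phi> z) * indicator (gauge_ball \<gamma> r) z) \<in> borel_measurable borel"
    and "(\<lambda>z. ennreal (energy_density \<gamma> \<alpha> t \<phi> z) * indicator (gauge_ball \<gamma> r) z) \<in> borel_measurable borel"
proof -
  note [measurable] = gauge_measurable[OF g]
    borel_measurable_continuous_onI[OF c\<phi>] borel_measurable_continuous_onI[OF cD]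
  have [measurable]: "gauge_ball \<gamma> r \<in> sets borel"
    unfolding gauge_ball_def by measurable
  have [measurable]: "(\<lambda>z::(real^'m) \<times> (real^'k). norm (fst z)) \<in> borel_measurable borel"
    by (intro borel_measurable_continuous_onI continuous_intros)
  show "(\<lambda>z. ennreal (hardy_density \<gamma> \<alpha> t r \<phi> z) * indicator (gauge_ball \<gamma> r) z) \<in> borel_measurable borel"
    unfolding hardy_density_def hardy_weight_def grad_gauge_norm_def by measurable
  show "(\<lambda>z. ennreal (energy_density \<gamma> \<alpha> t \<phi> z) * indicator (gauge_ball \<gamma> r) z) \<in> borel_measurable borel"
    unfolding energy_density_def grad_gauge_norm_def grushin_grad_sq_def by measurable
qed

lemma ennreal_combination_indicator:
  fixes a b x y :: real
  assumes "0 \<le> a" "0 \<le> b" "0 \<le> x" "0 \<le> y"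
  shows "ennreal (a * x + b * y) * indicator A z
       = ennreal a * (ennreal x * indicator A z) + ennreal b * (ennreal y * indicator A z)"
proof -
  have "ennreal (a * x + b * y) = ennreal a * ennreal x + ennreal b * ennreal y"
    using assms by (simp add: ennreal_plus ennreal_mult')
  then show ?thesis by (simp add: indicator_def)
qed

lemma nn_integral_hardy_density:
  fixes \<phi> :: "(real^'m::finite) \<times> (real^'k::finite) \<Rightarrow> real"
  assumes g: "\<gamma> > 0" and c\<phi>: "continuous_on UNIV \<phi>"
  shows "(\<integral>\<^sup>+z. ennreal (hardy_density \<gamma> \<alpha> t r \<phi> z) * indicator (gauge_ball \<gamma> r) z \<partial>lborel)
       = ennreal (((hom_dim \<gamma> TYPE('m) TYPE('k) + \<alpha> - 2) / 2)\<^sup>2) *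
           (\<integral>\<^sup>+ z \<in> gauge_ball \<gamma> r.
              ennreal (gauge \<gamma> z powr (\<alpha> - 2) * grad_gauge_norm \<gamma> z powr (t + 2) * (\<phi> z)\<^sup>2) \<partial>lborel)
         + ennreal (1/4) *
           (\<integral>\<^sup>+ z \<in> gauge_ball \<gamma> r.
              ennreal (gauge \<gamma> z powr (\<alpha> - 2) * grad_gauge_norm \<gamma> z powr (t + 2) * (\<phi> z)\<^sup>2
                       / (ln (r / gauge \<gamma> z))\<^sup>2) \<partial>lborel)"
proof -
  note [measurable] = gauge_measurable[OF g] borel_measurable_continuous_onI[OF c\<phi>]
  have [measurable]: "gauge_ball \<gamma> r \<in> sets borel"
    unfolding gauge_ball_def by measurable
  have [measurable]: "(\<lambda>z::(real^'m) \<times> (real^'k). norm (fst z)) \<in> borel_measurable borel"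
    by (intro borel_measurable_continuous_onI continuous_intros)
  define W where "W z = ennreal (gauge \<gamma> z powr (\<alpha> - 2) * grad_gauge_norm \<gamma> z powr (t + 2) * (\<phi> z)\<^sup>2)
                         * indicator (gauge_ball \<gamma> r) z" for z
  define L where "L z = ennreal (gauge \<gamma> z powr (\<alpha> - 2) * grad_gauge_norm \<gamma> z powr (t + 2) * (\<phi> z)\<^sup>2
                                 / (ln (r / gauge \<gamma> z))\<^sup>2) * indicator (gauge_ball \<gamma> r) z" for z
  define c where "c = ((hom_dim \<gamma> TYPE('m) TYPE('k) + \<alpha> - 2) / 2)\<^sup>2"
  have [measurable]: "W \<in> borel_measurable borel" "L \<in> borel_measurable borel"
    unfolding W_def L_def grad_gauge_norm_def by measurable
  have "(\<lambda>z. ennreal (hardy_density \<gamma> \<alpha> t r \<phi> z) * indicator (gauge_ball \<gamma> r) z)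
      = (\<lambda>z. ennreal c * W z + ennreal (1 / 4) * L z)"
    unfolding W_def L_def c_def hardy_density_def hardy_weight_def
    by (intro ext ennreal_combination_indicator) simp_all
  then have "(\<integral>\<^sup>+z. ennreal (hardy_density \<gamma> \<alpha> t r \<phi> z) * indicator (gauge_ball \<gamma> r) z \<partial>lborel)
      = ennreal c * (\<integral>\<^sup>+z. W z \<partial>lborel) + ennreal (1 / 4) * (\<integral>\<^sup>+z. L z \<partial>lborel)"
    by (simp add: nn_integral_add nn_integral_cmult)
  then show ?thesis
    unfolding W_def L_def c_def by simp
qed

theorem theorem3p2:
  fixes \<gamma> \<alpha> t r :: real and \<phi> :: "(real^'m::finite) \<times> (real^'k::finite) \<Rightarrow> real"
  assumes "\<gamma> > 0"
    and "hom_dim \<gamma> TYPE('m) TYPE('k) + \<alpha> - 2 > 0"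
    and "r > 0"
    and "C0_infty (gauge_ball \<gamma> r) \<phi>"
  shows "(\<integral>\<^sup>+ z \<in> gauge_ball \<gamma> r.
            ennreal (gauge \<gamma> z powr \<alpha> * grad_gauge_norm \<gamma> z powr t * grushin_grad_sq \<gamma> \<phi> z) \<partial>lborel)
       \<ge> ennreal (((hom_dim \<gamma> TYPE('m) TYPE('k) + \<alpha> - 2) / 2)\<^sup>2) *
           (\<integral>\<^sup>+ z \<in> gauge_ball \<gamma> r.
              ennreal (gauge \<gamma> z powr (\<alpha> - 2) * grad_gauge_norm \<gamma> z powr (t + 2) * (\<phi> z)\<^sup>2) \<partial>lborel)
         + ennreal (1/4) *
           (\<integral>\<^sup>+ z \<in> gauge_ball \<gamma> r.
              ennreal (gauge \<gamma> z powr (\<alpha> - 2) * grad_gauge_norm \<gamma> z powr (t + 2) * (\<phi> z)\<^sup>2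
                       / (ln (r / gauge \<gamma> z))\<^sup>2) \<partial>lborel)"
proof -
  note g = assms(1) and \<beta> = assms(2) and C = assms(4)
  note C1 = smooth_fun_C1[OF C[unfolded C0_infty_def, THEN conjunct1]]
  obtain r' where r': "0 < r'" "r' < r" and supp: "\<And>z. \<phi> z \<noteq> 0 \<Longrightarrow> gauge \<gamma> z < r'"
    using C0_infty_gauge_ball_support[OF g assms(3) C] by blast
  note integrands_measurable = density_measurable[OF g C1(1,3)]
  (* integrate the orbit inequality over the shell, in polar coordinates *)
  have "(\<integral>\<^sup>+z. ennreal (hardy_density \<gamma> \<alpha> t r \<phi> z) * indicator (gauge_ball \<gamma> r) z \<partial>lborel)
      \<le> (\<integral>\<^sup>+z. ennreal (energy_density \<gamma> \<alpha> t \<phi> z) * indicator (gauge_ball \<gamma> r) z \<partial>lborel)"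
    unfolding nn_integral_polar[OF g integrands_measurable(1)] nn_integral_polar[OF g integrands_measurable(2)]
    by (rule nn_integral_mono, rule mult_left_mono,
        rule orbit_inequality[OF g \<beta> C1(2,3) r', unfolded orbit_integrand_def])
       (simp_all add: supp indicator_def)
  then show ?thesis
    unfolding nn_integral_hardy_density[OF g C1(1)] energy_density_def by simp
qed

end
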